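(* Let $(G_n)$ be a sequence of finite graphs with $v_n:=|V(G_n)|$. Let $W_n\subset V(G_n)$ satisfy $\lim_n |W_n|/v_n=0$. For $R>0$ and $t>0$ let $$s_n(R,t):=\bigl|\{x\in V(G_n): |V_R(x)|>t\}\bigr| \quad\text{and}\quad w_n(R):=\bigl|\{x\in V(G_n): V_R(x)\cap W_n\neq\emptyset\}\bigr|,$$ where $V_R(x)$ is the vertex set of the ball of radius $R$ about $x$ in $G_n$ (graph distance). If for each $R>0$ we have $\lim_{t\to\infty}\limsup_{n\to\infty}s_n(R,t)/v_n=0$, then for each $R>0$ we have $\lim_{n\to\infty}w_n(R)/v_n=0$. *)

theory Defs
  imports Complex_Main "HOL-Library.Extended_Real" "HOL-Library.Liminf_Limsup"
begin

definition fin_graph :: "'a set \<Rightarrow> ('a \<Rightarrow> 'a \<Rightarrow> bool) \<Rightarrow> bool" where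
  "fin_graph V E \<longleftrightarrow> finite V \<and> (\<forall>x y. E x y \<longrightarrow> x \<in> V \<and> y \<in> V) \<and> (\<forall>x y. E x y \<longrightarrow> E y x)"

definition gball :: "'a set \<Rightarrow> ('a \<Rightarrow> 'a \<Rightarrow> bool) \<Rightarrow> real \<Rightarrow> 'a \<Rightarrow> 'a set" where
  "gball V E R x = {y \<in> V. \<exists>k::nat. real k \<le> R \<and> (E ^^ k) x y}"

end

theory Submission
  imports Defs
begin

text \<open>If the \<open>R\<close>-ball about \<open>x\<close> meets \<open>W\<close> in some \<open>w\<close>, then either the \<open>2R\<close>-ball about \<open>x\<close>
  has more than \<open>t\<close> vertices, or \<open>x\<close> lies in the \<open>R\<close>-ball about \<open>w\<close>, which is contained in that
  \<open>2R\<close>-ball and so has at most \<open>t\<close> vertices. Hence at most \<open>s\<^sub>n(2R,t) + t |W\<^sub>n|\<close> vertices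
  see \<open>W\<^sub>n\<close> within distance \<open>R\<close>; dividing by \<open>v\<^sub>n\<close>, first letting \<open>n \<rightarrow> \<infinity>\<close> and then \<open>t \<rightarrow> \<infinity>\<close>
  gives the claim.\<close>

lemma relpowp_symp:
  assumes "symp E" and "(E ^^ k) x y"
  shows "(E ^^ k) y x"
  using assms(2)
proof (induction k arbitrary: x y)
  case 0
  then show ?case by simp
next
  case (Suc k)
  then obtain z where "(E ^^ k) x z" and "E z y" by auto
  then have "E y z" and "(E ^^ k) z x" using assms(1) Suc.IH by (auto dest: sympD)
  then show ?case by (rule relpowp_Suc_I2)
qed

lemma symp_if_fin_graph: "fin_graph V E \<Longrightarrow> symp E"
  unfolding fin_graph_def by (blast intro: sympI)

lemma finite_gball: "fin_graph V E \<Longrightarrow> finite (gball V E R x)"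
  unfolding fin_graph_def gball_def by auto

lemma gball_commute:
  assumes "fin_graph V E" and "x \<in> V" and "y \<in> gball V E R x"
  shows "x \<in> gball V E R y"
  using assms relpowp_symp[OF symp_if_fin_graph[OF assms(1)]] unfolding gball_def by blast

lemma gball_subset_gball_add:
  assumes "x \<in> gball V E R y"
  shows "gball V E S x \<subseteq> gball V E (R + S) y"
proof
  fix z assume "z \<in> gball V E S x"
  then obtain a where "z \<in> V" "real a \<le> S" "(E ^^ a) x z" unfolding gball_def by auto
  moreover obtain b where "real b \<le> R" "(E ^^ b) y x" using assms unfolding gball_def by auto
  ultimately have "z \<in> V" "real (b + a) \<le> R + S" "(E ^^ (b + a)) y z"
    by (auto simp: relpowp_add)
  then show "z \<in> gball V E (R + S) y" unfolding gball_def by blast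
qed

lemma ball_meets_subset_big_balls_Un_small_balls:
  assumes "fin_graph V E"
  shows "{x \<in> V. gball V E R x \<inter> W \<noteq> {}}
    \<subseteq> {x \<in> V. real (card (gball V E (2 * R) x)) > t}
      \<union> (\<Union>w \<in> {w \<in> W. real (card (gball V E R w)) \<le> t}. gball V E R w)"
proof
  fix x assume x: "x \<in> {x \<in> V. gball V E R x \<inter> W \<noteq> {}}"
  then obtain w where w: "w \<in> gball V E R x" "w \<in> W" by auto
  show "x \<in> {x \<in> V. real (card (gball V E (2 * R) x)) > t}
      \<union> (\<Union>w \<in> {w \<in> W. real (card (gball V E R w)) \<le> t}. gball V E R w)"
  proof (cases "real (card (gball V E (2 * R) x)) \<le> t")
    case True
    have "gball V E R w \<subseteq> gball V E (2 * R) x"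
      using gball_subset_gball_add[OF w(1), of R] by simp
    then have "card (gball V E R w) \<le> card (gball V E (2 * R) x)"
      by (rule card_mono[OF finite_gball[OF assms]])
    moreover have "x \<in> gball V E R w" using gball_commute[OF assms _ w(1)] x by auto
    ultimately show ?thesis using True w(2) by force
  qed (use x in auto)
qed

lemma card_ball_meets_le:
  assumes G: "fin_graph V E" and "W \<subseteq> V" and "t \<ge> 0"
  shows "real (card {x \<in> V. gball V E R x \<inter> W \<noteq> {}})
    \<le> real (card {x \<in> V. real (card (gball V E (2 * R) x)) > t}) + t * real (card W)"
proof -
  let ?big = "{x \<in> V. real (card (gball V E (2 * R) x)) > t}"
  let ?W' = "{w \<in> W. real (card (gball V E R w)) \<le> t}"
  have "finite V" using G unfolding fin_graph_def by auto
  then have "finite W" using \<open>W \<subseteq> V\<close> by (rule finite_subset[rotated])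
  have "card {x \<in> V. gball V E R x \<inter> W \<noteq> {}} \<le> card (?big \<union> (\<Union>w \<in> ?W'. gball V E R w))"
    using ball_meets_subset_big_balls_Un_small_balls[OF G]
    by (rule card_mono[rotated]) (use \<open>finite V\<close> \<open>finite W\<close> finite_gball[OF G] in auto)
  also have "\<dots> \<le> card ?big + card (\<Union>w \<in> ?W'. gball V E R w)"
    by (rule card_Un_le)
  also have "\<dots> \<le> card ?big + (\<Sum>w \<in> ?W'. card (gball V E R w))"
    using \<open>finite W\<close> by (intro add_left_mono card_UN_le) simp
  finally have "real (card {x \<in> V. gball V E R x \<inter> W \<noteq> {}})
      \<le> real (card ?big) + (\<Sum>w \<in> ?W'. real (card (gball V E R w)))"
    by (simp only: of_nat_sum[symmetric] of_nat_add[symmetric] of_nat_le_iff)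
  also have "(\<Sum>w \<in> ?W'. real (card (gball V E R w))) \<le> (\<Sum>w \<in> ?W'. t)"
    by (rule sum_mono) simp
  also have "\<dots> = t * real (card ?W')"
    by simp
  also have "\<dots> \<le> t * real (card W)"
    using \<open>t \<ge> 0\<close> card_mono[OF \<open>finite W\<close>, of ?W'] by (intro mult_left_mono) auto
  finally show ?thesis by simp
qed

lemma tendsto_zero_if_bounded_by_limsup_family:
  fixes a c :: "nat \<Rightarrow> real" and b :: "real \<Rightarrow> nat \<Rightarrow> real"
  assumes a_nonneg: "\<And>n. 0 \<le> a n"
    and bound: "\<And>t n. t \<ge> 0 \<Longrightarrow> a n \<le> b t n + t * c n"
    and c_lim: "c \<longlonglongrightarrow> 0"
    and b_lim: "((\<lambda>t. limsup (\<lambda>n. ereal (b t n))) \<longlongrightarrow> 0) at_top"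
  shows "a \<longlonglongrightarrow> 0"
proof (rule order_tendstoI)
  fix e :: real assume "e < 0"
  then show "\<forall>\<^sub>F n in sequentially. e < a n"
    using a_nonneg by (auto intro: always_eventually less_le_trans)
next
  fix e :: real assume "e > 0"
  then have "\<forall>\<^sub>F t in at_top. limsup (\<lambda>n. ereal (b t n)) < ereal (e / 2)"
    using order_tendstoD(2)[OF b_lim] by simp
  moreover have "\<forall>\<^sub>F t in at_top. t \<ge> (0::real)"
    by (rule eventually_ge_at_top)
  ultimately obtain t where t: "t \<ge> 0" "limsup (\<lambda>n. ereal (b t n)) < ereal (e / 2)"
    using eventually_happens'[OF trivial_limit_at_top_linorder] eventually_conj by blast
  have "\<forall>\<^sub>F n in sequentially. b t n < e / 2"
    using Limsup_lessD[OF t(2)] by simp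
  moreover have "\<forall>\<^sub>F n in sequentially. t * c n < e / 2"
    using \<open>e > 0\<close> tendsto_mult_left[OF c_lim, of t] by (intro order_tendstoD(2)) auto
  ultimately show "\<forall>\<^sub>F n in sequentially. a n < e"
  proof eventually_elim
    case (elim n)
    then show ?case using bound[OF t(1), of n] by linarith
  qed
qed

theorem lemma3p12:
  fixes V :: "nat \<Rightarrow> 'a set" and E :: "nat \<Rightarrow> 'a \<Rightarrow> 'a \<Rightarrow> bool" and W :: "nat \<Rightarrow> 'a set"
  assumes graphs: "\<And>n. fin_graph (V n) (E n)"
    and W_sub: "\<And>n. W n \<subseteq> V n"
    and W_small: "(\<lambda>n. real (card (W n)) / real (card (V n))) \<longlonglongrightarrow> 0"
    and s_small: "\<And>R. R > 0 \<Longrightarrow>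
        ((\<lambda>t. limsup (\<lambda>n. ereal (real (card {x \<in> V n. real (card (gball (V n) (E n) R x)) > t})
                                     / real (card (V n))))) \<longlongrightarrow> 0) at_top"
    and R_pos: "R > 0"
  shows "(\<lambda>n. real (card {x \<in> V n. gball (V n) (E n) R x \<inter> W n \<noteq> {}}) / real (card (V n))) \<longlonglongrightarrow> 0"
proof (rule tendsto_zero_if_bounded_by_limsup_family)
  show "((\<lambda>t. limsup (\<lambda>n. ereal (real (card {x \<in> V n. real (card (gball (V n) (E n) (2 * R) x)) > t})
      / real (card (V n))))) \<longlongrightarrow> 0) at_top"
    using s_small R_pos by simp
next
  fix t :: real and n assume "t \<ge> 0"
  have "real (card {x \<in> V n. gball (V n) (E n) R x \<inter> W n \<noteq> {}}) / real (card (V n))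
      \<le> (real (card {x \<in> V n. real (card (gball (V n) (E n) (2 * R) x)) > t})
          + t * real (card (W n))) / real (card (V n))"
    using card_ball_meets_le[OF graphs W_sub \<open>t \<ge> 0\<close>] by (rule divide_right_mono) simp
  then show "real (card {x \<in> V n. gball (V n) (E n) R x \<inter> W n \<noteq> {}}) / real (card (V n))
      \<le> real (card {x \<in> V n. real (card (gball (V n) (E n) (2 * R) x)) > t}) / real (card (V n))
        + t * (real (card (W n)) / real (card (V n)))"
    by (simp add: add_divide_distrib)
qed (use W_small in auto)

end
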